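(* Let $\mathcal{K}$ be a Fraïssé class in a finite relational language $\mathcal{L}$, let $\mathbf{K}=\mathrm{Flim}(\mathcal{K})$ have finite big Ramsey degrees, and let $\mathbf{K}^*$ be a recurrent big Ramsey structure for $\mathbf{K}$. Then $\mathbf{K}^*$ interprets an ordering of the underlying set $K$ of $\mathbf{K}$ of order type $\omega$.
   Context: For structures $\mathbf{A},\mathbf{B}$, $\mathrm{Emb}(\mathbf{A},\mathbf{B})$ is the set of embeddings. For $\mathbf{A}\in\mathcal{K}$, the big Ramsey degree $\mathrm{BRD}(\mathbf{A},\mathbf{K})$ is the least $t$ (if it exists) such that for every $r>t$ and every coloring $\chi:\mathrm{Emb}(\mathbf{A},\mathbf{K})\to r$ there is $g\in\mathrm{Emb}(\mathbf{K},\mathbf{K})$ with $|\chi[g\circ\mathrm{Emb}(\mathbf{A},\mathbf{K})]|\le t$. For $\mathcal{L}^*\supseteq\mathcal{L}$ and an $\mathcal{L}^*$-expansion $\mathbf{M}^*$ of $\mathbf{M}$ (same underlying set, $\mathcal{L}$-reduct equal to $\mathbf{M}$), $\mathbf{M}^*(\mathbf{B})$ denotes the set of $\mathcal{L}^*$-expansions of the finite structure $\mathbf{B}$ embeddable in $\mathbf{M}^*$, and for $f\in\mathrm{Emb}(\mathbf{B},\mathbf{M})$, $\mathbf{M}^*\cdot f$ is the unique $\mathbf{B}^*\in\mathbf{M}^*(\mathbf{B})$ with $f\in\mathrm{Emb}(\mathbf{B}^*,\mathbf{M}^* )$. A big Ramsey structure for $\mathbf{K}$ is an expansion $\mathbf{K}^*$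 such that for every $\mathbf{A}\in\mathcal{K}$, $|\mathbf{K}^*(\mathbf{A})|=\mathrm{BRD}(\mathbf{A},\mathbf{K})$ and for every $g\in\mathrm{Emb}(\mathbf{K},\mathbf{K})$ the coloring $f\mapsto\mathbf{K}^*\cdot f$ takes all $|\mathbf{K}^*(\mathbf{A})|$ values on $g\circ\mathrm{Emb}(\mathbf{A},\mathbf{K})$. It is recurrent if $\mathrm{Emb}(\mathbf{K}^*,\mathbf{K}^*\cdot\eta)\ne\emptyset$ for every $\eta\in\mathrm{Emb}(\mathbf{K},\mathbf{K})$, where $\mathbf{K}^*\cdot\eta$ is the expansion of $\mathbf{K}$ pulled back along $\eta$. *)

theory Defs
  imports "HOL-Library.FuncSet" "HOL-Library.Countable_Set"
begin

text \<open>Relational structures: a universe together with an interpretation of every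
relation symbol as a predicate on tuples (lists).  A language is a set of symbols
together with an arity function.\<close>

type_synonym ('a, 'r) struct = "'a set \<times> ('r \<Rightarrow> 'a list \<Rightarrow> bool)"

definition univ :: "('a, 'r) struct \<Rightarrow> 'a set" where
  "univ A = fst A"

definition rel :: "('a, 'r) struct \<Rightarrow> 'r \<Rightarrow> 'a list \<Rightarrow> bool" where
  "rel A = snd A"

definition wf_struct :: "'r set \<Rightarrow> ('r \<Rightarrow> nat) \<Rightarrow> ('a, 'r) struct \<Rightarrow> bool" where
  "wf_struct L ar A \<longleftrightarrow>
     (\<forall>r xs. rel A r xs \<longrightarrow> r \<in> L \<and> length xs = ar r \<and> set xs \<subseteq> univ A)"

definition Emb :: "'r set \<Rightarrow> ('r \<Rightarrow> nat) \<Rightarrow> ('a, 'r) struct \<Rightarrow> ('b, 'r) struct \<Rightarrow> ('a \<Rightarrow> 'b) set" where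
  "Emb L ar A B = {f. f \<in> extensional (univ A) \<and> f ` univ A \<subseteq> univ B \<and> inj_on f (univ A) \<and>
     (\<forall>r\<in>L. \<forall>xs. length xs = ar r \<longrightarrow> set xs \<subseteq> univ A \<longrightarrow>
        (rel A r xs \<longleftrightarrow> rel B r (map f xs)))}"

definition emb_comp :: "('a, 'r) struct \<Rightarrow> ('b \<Rightarrow> 'c) \<Rightarrow> ('a \<Rightarrow> 'b) \<Rightarrow> ('a \<Rightarrow> 'c)" where
  "emb_comp A g f = restrict (g \<circ> f) (univ A)"

definition induced :: "('a, 'r) struct \<Rightarrow> 'a set \<Rightarrow> ('a, 'r) struct" where
  "induced K S = (S, \<lambda>r xs. rel K r xs \<and> set xs \<subseteq> S)"

text \<open>The age of K: finite L-structures embeddable in K (closed under isomorphism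
within the type 'a, which is infinite whenever K is).\<close>
definition age :: "'r set \<Rightarrow> ('r \<Rightarrow> nat) \<Rightarrow> ('a, 'r) struct \<Rightarrow> ('a, 'r) struct set" where
  "age L ar K = {A. wf_struct L ar A \<and> finite (univ A) \<and> Emb L ar A K \<noteq> {}}"

definition ultrahomogeneous :: "'r set \<Rightarrow> ('r \<Rightarrow> nat) \<Rightarrow> ('a, 'r) struct \<Rightarrow> bool" where
  "ultrahomogeneous L ar K \<longleftrightarrow>
     (\<forall>S. finite S \<longrightarrow> S \<subseteq> univ K \<longrightarrow>
        (\<forall>p \<in> Emb L ar (induced K S) K.
           \<exists>\<sigma> \<in> Emb L ar K K. \<sigma> ` univ K = univ K \<and> (\<forall>x\<in>S. \<sigma> x = p x)))"

text \<open>K is the Fraisse limit of a Fraisse class (namely of its age): a countably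
infinite ultrahomogeneous L-structure.\<close>
definition fraisse_limit :: "'r set \<Rightarrow> ('r \<Rightarrow> nat) \<Rightarrow> ('a, 'r) struct \<Rightarrow> bool" where
  "fraisse_limit L ar K \<longleftrightarrow>
     wf_struct L ar K \<and> countable (univ K) \<and> infinite (univ K) \<and> ultrahomogeneous L ar K"

definition brd_bound :: "'r set \<Rightarrow> ('r \<Rightarrow> nat) \<Rightarrow> ('a, 'r) struct \<Rightarrow> ('a, 'r) struct \<Rightarrow> nat \<Rightarrow> bool" where
  "brd_bound L ar A K t \<longleftrightarrow>
     (\<forall>r > t. \<forall>\<chi> :: ('a \<Rightarrow> 'a) \<Rightarrow> nat. \<chi> ` Emb L ar A K \<subseteq> {..<r} \<longrightarrow>
        (\<exists>g \<in> Emb L ar K K. card (\<chi> ` (emb_comp A g ` Emb L ar A K)) \<le> t))"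

definition BRD :: "'r set \<Rightarrow> ('r \<Rightarrow> nat) \<Rightarrow> ('a, 'r) struct \<Rightarrow> ('a, 'r) struct \<Rightarrow> nat" where
  "BRD L ar A K = (LEAST t. brd_bound L ar A K t)"

definition finite_BRDs :: "'r set \<Rightarrow> ('r \<Rightarrow> nat) \<Rightarrow> ('a, 'r) struct \<Rightarrow> bool" where
  "finite_BRDs L ar K \<longleftrightarrow> (\<forall>A \<in> age L ar K. \<exists>t. brd_bound L ar A K t)"

definition is_expansion :: "'r set \<Rightarrow> ('r \<Rightarrow> nat) \<Rightarrow> 'r set \<Rightarrow> ('a, 'r) struct \<Rightarrow> ('a, 'r) struct \<Rightarrow> bool" where
  "is_expansion L ar Ls Bs B \<longleftrightarrow>
     wf_struct Ls ar Bs \<and> univ Bs = univ B \<and> (\<forall>r\<in>L. \<forall>xs. rel Bs r xs = rel B r xs)"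

definition exps :: "'r set \<Rightarrow> ('r \<Rightarrow> nat) \<Rightarrow> 'r set \<Rightarrow> ('a, 'r) struct \<Rightarrow> ('a, 'r) struct \<Rightarrow> ('a, 'r) struct set" where
  "exps L ar Ls Ks B = {Bs. is_expansion L ar Ls Bs B \<and> Emb Ls ar Bs Ks \<noteq> {}}"

definition exp_dot :: "'r set \<Rightarrow> ('r \<Rightarrow> nat) \<Rightarrow> ('b, 'r) struct \<Rightarrow> ('a, 'r) struct \<Rightarrow> ('a \<Rightarrow> 'b) \<Rightarrow> ('a, 'r) struct" where
  "exp_dot Ls ar Ks B f =
     (univ B, \<lambda>r xs. r \<in> Ls \<and> length xs = ar r \<and> set xs \<subseteq> univ B \<and> rel Ks r (map f xs))"

definition big_ramsey_structure :: "'r set \<Rightarrow> ('r \<Rightarrow> nat) \<Rightarrow> 'r set \<Rightarrow> ('a, 'r) struct \<Rightarrow> ('a, 'r) struct \<Rightarrow> bool" where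
  "big_ramsey_structure L ar Ls K Ks \<longleftrightarrow>
     is_expansion L ar Ls Ks K \<and>
     (\<forall>A \<in> age L ar K.
        card (exps L ar Ls Ks A) = BRD L ar A K \<and>
        (\<forall>g \<in> Emb L ar K K.
           card ((\<lambda>f. exp_dot Ls ar Ks A f) ` (emb_comp A g ` Emb L ar A K)) = card (exps L ar Ls Ks A)))"

definition recurrent :: "'r set \<Rightarrow> ('r \<Rightarrow> nat) \<Rightarrow> 'r set \<Rightarrow> ('a, 'r) struct \<Rightarrow> ('a, 'r) struct \<Rightarrow> bool" where
  "recurrent L ar Ls K Ks \<longleftrightarrow>
     (\<forall>\<eta> \<in> Emb L ar K K. Emb Ls ar Ks (exp_dot Ls ar Ks K \<eta>) \<noteq> {})"

text \<open>Ks interprets an ordering of its universe of order type omega: there is a strict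
order less, isomorphic via an enumeration h to (nat, <), which is quantifier-free
definable in Ks from pairs, i.e. whether less a b holds depends only on the
Ks-isomorphism type of the pair (a,b).\<close>
definition interprets_omega_order :: "'r set \<Rightarrow> ('a, 'r) struct \<Rightarrow> bool" where
  "interprets_omega_order Ls Ks \<longleftrightarrow>
     (\<exists>less :: 'a \<Rightarrow> 'a \<Rightarrow> bool.
        (\<exists>h :: nat \<Rightarrow> 'a. bij_betw h UNIV (univ Ks) \<and> (\<forall>i j. i < j \<longleftrightarrow> less (h i) (h j))) \<and>
        (\<forall>a\<in>univ Ks. \<forall>b\<in>univ Ks. \<forall>c\<in>univ Ks. \<forall>d\<in>univ Ks.
           ((a = b) \<longleftrightarrow> (c = d)) \<and>
           (\<forall>r\<in>Ls. \<forall>xs. set xs \<subseteq> {a, b} \<longrightarrow>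
               (rel Ks r xs \<longleftrightarrow> rel Ks r (map (\<lambda>x. if x = a then c else d) xs)))
           \<longrightarrow> (less a b \<longleftrightarrow> less c d)))"

end

theory Submission
  imports Defs
begin

(* Enumerate K by an injection nu into the naturals and colour every embedding f of a two-point
   structure on {x0, y0} by whether nu (f x0) < nu (f y0).  Colouring such embeddings by the pair
   (K*-type, colour) and applying the big Ramsey degree t = |K*(A)| yields a copy g of K on which
   at most t pairs occur; since every copy already realises all t types, the colour is a function
   of the K*-type there.  Doing this for the finitely many two-point structures gives one copy g.
   Recurrence provides an embedding e of K* into the pullback of K* along g, so h = g o e is a
   self-embedding of K*, and a < b iff nu (h a) < nu (h b) is an ordering of type omega that
   depends only on the K*-type of (a, b). *)

lemma inj_on_nat_ordered_enumeration:
  fixes \<nu> :: "'a \<Rightarrow> nat"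
  assumes "infinite S" "inj_on \<nu> S"
  obtains h :: "nat \<Rightarrow> 'a"
  where "bij_betw h UNIV S" "\<And>i j. i < j \<longleftrightarrow> \<nu> (h i) < \<nu> (h j)"
proof -
  have inf: "infinite (\<nu> ` S)"
    using assms finite_imageD by blast
  define h where "h = inv_into S \<nu> \<circ> enumerate (\<nu> ` S)"
  have enum: "bij_betw (enumerate (\<nu> ` S)) UNIV (\<nu> ` S)"
    using bij_enumerate[OF inf] .
  have "bij_betw (inv_into S \<nu>) (\<nu> ` S) S"
    using assms(2) by (simp add: bij_betw_inv_into inj_on_imp_bij_betw)
  then have "bij_betw h UNIV S"
    unfolding h_def using bij_betw_trans[OF enum] by blast
  moreover have "\<nu> (h i) = enumerate (\<nu> ` S) i" for i
  proof -
    have "enumerate (\<nu> ` S) i \<in> \<nu> ` S"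
      using enum bij_betwE by blast
    then show ?thesis
      unfolding h_def comp_def by (rule f_inv_into_f)
  qed
  ultimately show ?thesis
    using that enumerate_mono_iff[OF inf] by presburger
qed

lemma Emb_image_subset: "f \<in> Emb L ar A B \<Longrightarrow> f ` univ A \<subseteq> univ B"
  by (simp add: Emb_def)

lemma emb_comp_in_Emb:
  assumes f: "f \<in> Emb L ar A B" and g: "g \<in> Emb L ar B C"
  shows "emb_comp A g f \<in> Emb L ar A C"
proof -
  have map_comp: "map (emb_comp A g f) xs = map g (map f xs)" if "set xs \<subseteq> univ A" for xs
    using that by (auto simp: emb_comp_def)
  have "inj_on (g \<circ> f) (univ A)"
    using f g by (auto simp: Emb_def intro: comp_inj_on inj_on_subset)
  then have "inj_on (emb_comp A g f) (univ A)"
    by (simp add: emb_comp_def inj_on_def)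
  moreover have "emb_comp A g f ` univ A \<subseteq> univ C"
    using f g by (auto simp: Emb_def emb_comp_def)
  moreover have "rel A r xs \<longleftrightarrow> rel C r (map (emb_comp A g f) xs)"
    if "r \<in> L" "length xs = ar r" "set xs \<subseteq> univ A" for r xs
  proof -
    have "set (map f xs) \<subseteq> univ B"
      using that(3) Emb_image_subset[OF f] by auto
    then show ?thesis
      using f g that by (simp add: Emb_def map_comp)
  qed
  ultimately show ?thesis
    unfolding Emb_def by (simp add: emb_comp_def)
qed

lemma restrict_id_in_Emb: "restrict id (univ K) \<in> Emb L ar K K"
proof -
  have "map (restrict id (univ K)) xs = xs" if "set xs \<subseteq> univ K" for xs
    using that by (induction xs) auto
  then show ?thesis
    unfolding Emb_def by (auto simp: inj_on_def)
qed

lemma emb_comp_assoc: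
  "f ` univ A \<subseteq> univ K \<Longrightarrow> emb_comp A (emb_comp K g g') f = emb_comp A g (emb_comp A g' f)"
  by (auto simp: emb_comp_def fun_eq_iff)

lemma Emb_reduct:
  assumes "L \<subseteq> Ls" "is_expansion L ar Ls Ms M" "is_expansion L ar Ls Ns N"
    and "f \<in> Emb Ls ar Ms Ns"
  shows "f \<in> Emb L ar M N"
proof -
  have "rel M r xs \<longleftrightarrow> rel N r (map f xs)"
    if "r \<in> L" "length xs = ar r" "set xs \<subseteq> univ M" for r xs
  proof -
    have "rel M r xs \<longleftrightarrow> rel Ms r xs"
      using assms(2) that(1) by (simp add: is_expansion_def)
    also have "\<dots> \<longleftrightarrow> rel Ns r (map f xs)"
    proof -
      have "r \<in> Ls" "set xs \<subseteq> univ Ms"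
        using assms(1,2) that by (auto simp: is_expansion_def)
      then show ?thesis
        using assms(4) that(2) by (simp add: Emb_def)
    qed
    also have "\<dots> \<longleftrightarrow> rel N r (map f xs)"
      using assms(3) that(1) by (simp add: is_expansion_def)
    finally show ?thesis .
  qed
  then show ?thesis
    using assms(2-4) by (auto simp: Emb_def is_expansion_def)
qed

definition pullback ::
  "'r set \<Rightarrow> ('r \<Rightarrow> nat) \<Rightarrow> ('b, 'r) struct \<Rightarrow> 'a set \<Rightarrow> ('a \<Rightarrow> 'b) \<Rightarrow> ('a, 'r) struct"
  where "pullback L ar M X f =
    (X, \<lambda>r xs. r \<in> L \<and> length xs = ar r \<and> set xs \<subseteq> X \<and> rel M r (map f xs))"

lemma univ_pullback [simp]: "univ (pullback L ar M X f) = X"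
  by (simp add: pullback_def univ_def)

lemma rel_pullback [simp]:
  "rel (pullback L ar M X f) r xs \<longleftrightarrow>
    r \<in> L \<and> length xs = ar r \<and> set xs \<subseteq> X \<and> rel M r (map f xs)"
  by (simp add: pullback_def rel_def)

lemma exp_dot_eq_pullback: "exp_dot Ls ar Ks B f = pullback Ls ar Ks (univ B) f"
  by (simp add: exp_dot_def pullback_def)

lemma wf_struct_pullback: "wf_struct L ar (pullback L ar M X f)"
  by (simp add: wf_struct_def)

lemma pullback_Emb:
  assumes "f \<in> extensional X" "inj_on f X" "f ` X \<subseteq> univ M"
  shows "f \<in> Emb L ar (pullback L ar M X f) M"
  using assms by (simp add: Emb_def)

lemma exp_dot_is_expansion:
  assumes "L \<subseteq> Ls" and exp: "is_expansion L ar Ls Ks K"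
    and wf: "wf_struct L ar A" and f: "f \<in> Emb L ar A K"
  shows "is_expansion L ar Ls (exp_dot Ls ar Ks A f) A"
proof -
  have "rel (pullback Ls ar Ks (univ A) f) r xs = rel A r xs" if "r \<in> L" for r xs
  proof (cases "length xs = ar r \<and> set xs \<subseteq> univ A")
    case True
    then have "rel A r xs \<longleftrightarrow> rel K r (map f xs)"
      using f that by (simp add: Emb_def)
    then show ?thesis
      using True that assms(1) exp by (auto simp: is_expansion_def)
  next
    case False
    then show ?thesis
      using wf by (auto simp: wf_struct_def)
  qed
  then show ?thesis
    by (simp add: is_expansion_def exp_dot_eq_pullback wf_struct_pullback)
qed

lemma exp_dot_in_exps:
  assumes "L \<subseteq> Ls" and exp: "is_expansion L ar Ls Ks K"
    and "wf_struct L ar A" and f: "f \<in> Emb L ar A K"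
  shows "exp_dot Ls ar Ks A f \<in> exps L ar Ls Ks A"
proof -
  have "univ Ks = univ K"
    using exp by (simp add: is_expansion_def)
  then have "f \<in> Emb Ls ar (exp_dot Ls ar Ks A f) Ks"
    unfolding exp_dot_eq_pullback using f by (intro pullback_Emb) (auto simp: Emb_def)
  then show ?thesis
    using exp_dot_is_expansion[OF assms] by (auto simp: exps_def)
qed

lemma emb_comp_in_Emb_of_exp_dot:
  assumes e: "e \<in> Emb Ls ar M (exp_dot Ls ar N B g)"
    and g: "g ` univ B \<subseteq> univ N" "inj_on g (univ B)"
  shows "emb_comp M g e \<in> Emb Ls ar M N"
proof -
  have e_into: "e ` univ M \<subseteq> univ B"
    using Emb_image_subset[OF e] by (simp add: exp_dot_eq_pullback)
  have "inj_on (g \<circ> e) (univ M)"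
    using e g(2) e_into by (auto simp: Emb_def intro: comp_inj_on inj_on_subset)
  then have "inj_on (emb_comp M g e) (univ M)"
    by (simp add: emb_comp_def inj_on_def)
  moreover have "rel M r xs \<longleftrightarrow> rel N r (map (emb_comp M g e) xs)"
    if "r \<in> Ls" "length xs = ar r" "set xs \<subseteq> univ M" for r xs
  proof -
    have map_eq: "map (emb_comp M g e) xs = map g (map e xs)"
      using that(3) by (auto simp: emb_comp_def)
    have "set (map e xs) \<subseteq> univ B"
      using that(3) e_into by auto
    then show ?thesis
      unfolding map_eq using e that by (auto simp: Emb_def exp_dot_eq_pullback)
  qed
  moreover have "emb_comp M g e ` univ M \<subseteq> univ N"
    using g(1) e_into by (auto simp: emb_comp_def image_subset_iff)
  ultimately show ?thesis
    by (simp add: Emb_def emb_comp_def)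
qed

lemma exp_dot_emb_comp_self_embedding:
  assumes h: "h \<in> Emb Ls ar Ks Ks" and f: "f ` univ B \<subseteq> univ Ks"
  shows "exp_dot Ls ar Ks B (emb_comp B h f) = exp_dot Ls ar Ks B f"
proof -
  have "rel Ks r (map (emb_comp B h f) xs) \<longleftrightarrow> rel Ks r (map f xs)"
    if "r \<in> Ls" "length xs = ar r" "set xs \<subseteq> univ B" for r xs
  proof -
    have map_eq: "map (emb_comp B h f) xs = map h (map f xs)"
      using that(3) by (auto simp: emb_comp_def)
    have "set (map f xs) \<subseteq> univ Ks"
      using that(3) f by auto
    then show ?thesis
      unfolding map_eq using h that by (auto simp: Emb_def)
  qed
  then show ?thesis
    by (auto simp: exp_dot_def fun_eq_iff)
qed

lemma finite_age_univ_eq: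
  assumes "finite L" "finite X"
  shows "finite {A \<in> age L ar K. univ A = X}"
proof -
  define T where "T = (SIGMA r:L. {xs. set xs \<subseteq> X \<and> length xs = ar r})"
  have "finite T"
    unfolding T_def using assms by (intro finite_SigmaI finite_lists_length_eq) auto
  moreover have "{A \<in> age L ar K. univ A = X} \<subseteq> (\<lambda>U. (X, \<lambda>r xs. (r, xs) \<in> U)) ` Pow T"
  proof
    fix A assume "A \<in> {A \<in> age L ar K. univ A = X}"
    then have "A = (X, \<lambda>r xs. (r, xs) \<in> {(r, xs). rel A r xs})" "{(r, xs). rel A r xs} \<subseteq> T"
      by (auto simp: age_def wf_struct_def univ_def rel_def T_def)
    then show "A \<in> (\<lambda>U. (X, \<lambda>r xs. (r, xs) \<in> U)) ` Pow T"
      by blast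
  qed
  ultimately show ?thesis
    by (meson finite_Pow_iff finite_imageI finite_subset)
qed

lemma brd_bound_BRD:
  assumes "finite_BRDs L ar K" "A \<in> age L ar K"
  shows "brd_bound L ar A K (BRD L ar A K)"
proof -
  obtain t where "brd_bound L ar A K t"
    using assms unfolding finite_BRDs_def by blast
  then show ?thesis
    unfolding BRD_def by (rule LeastI)
qed

lemma brd_bound_finite_colouring:
  fixes \<chi> :: "('a \<Rightarrow> 'a) \<Rightarrow> 'c"
  assumes bound: "brd_bound L ar A K t" and fin: "finite (\<chi> ` Emb L ar A K)"
  obtains g where "g \<in> Emb L ar K K" "card (\<chi> ` emb_comp A g ` Emb L ar A K) \<le> t"
proof -
  define Col where "Col = \<chi> ` Emb L ar A K"
  obtain enc where enc: "bij_betw enc Col {0..<card Col}"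
    using ex_bij_betw_finite_nat fin unfolding Col_def by blast
  have "enc c < max (Suc t) (card Col)" if "c \<in> Col" for c
    using bij_betwE[OF enc] that by (auto simp: less_max_iff_disj)
  then have "(enc \<circ> \<chi>) ` Emb L ar A K \<subseteq> {..<max (Suc t) (card Col)}"
    by (auto simp: Col_def)
  moreover have "t < max (Suc t) (card Col)"
    by simp
  ultimately obtain g where g: "g \<in> Emb L ar K K"
    and few: "card ((enc \<circ> \<chi>) ` emb_comp A g ` Emb L ar A K) \<le> t"
    using bound unfolding brd_bound_def by blast
  define C where "C = emb_comp A g ` Emb L ar A K"
  have "C \<subseteq> Emb L ar A K"
    using g emb_comp_in_Emb unfolding C_def by blast
  then have "\<chi> ` C \<subseteq> Col"
    unfolding Col_def by (rule image_mono)
  then have "inj_on enc (\<chi> ` C)"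
    using enc by (auto simp: bij_betw_def intro: inj_on_subset)
  then have "card (enc ` \<chi> ` C) = card (\<chi> ` C)"
    by (rule card_image)
  then show ?thesis
    using that g few unfolding C_def image_comp[symmetric] by simp
qed

lemma brd_bound_pos:
  assumes bound: "brd_bound L ar A K t" and "Emb L ar A K \<noteq> {}"
  shows "0 < t"
proof -
  have "finite ((\<lambda>_. 0::nat) ` Emb L ar A K)"
    by (rule finite_subset[of _ "{0}"]) auto
  then obtain g where "g \<in> Emb L ar K K"
    and few: "card ((\<lambda>_. 0::nat) ` emb_comp A g ` Emb L ar A K) \<le> t"
    by (rule brd_bound_finite_colouring[OF bound])
  have "emb_comp A g ` Emb L ar A K \<noteq> {}"
    using assms(2) by simp
  then have "(\<lambda>_. 0::nat) ` emb_comp A g ` Emb L ar A K = {0}"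
    by (simp only: image_constant_conv if_False)
  then show ?thesis
    using few by simp
qed

lemma determined_if_card_image_pair_le:
  assumes fin: "finite ((\<lambda>x. (\<kappa> x, \<pi> x)) ` C)"
    and le: "card ((\<lambda>x. (\<kappa> x, \<pi> x)) ` C) \<le> card (\<kappa> ` C)"
    and "x \<in> C" "y \<in> C" "\<kappa> x = \<kappa> y"
  shows "\<pi> x = \<pi> y"
proof -
  let ?pairs = "(\<lambda>x. (\<kappa> x, \<pi> x)) ` C"
  have "fst ` ?pairs = \<kappa> ` C"
    by (simp add: image_image)
  then have "card (fst ` ?pairs) = card ?pairs"
    using le card_image_le[OF fin, of fst] by simp
  then have inj: "inj_on fst ?pairs"
    using fin by (simp add: eq_card_imp_inj_on)
  have mem: "(\<kappa> x, \<pi> x) \<in> ?pairs" "(\<kappa> y, \<pi> y) \<in> ?pairs"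
    using assms(3,4) by blast+
  have "(\<kappa> x, \<pi> x) = (\<kappa> y, \<pi> y)"
    by (rule inj_onD[OF inj _ mem]) (simp add: assms(5))
  then show ?thesis
    by simp
qed

definition exp_determined ::
  "'r set \<Rightarrow> ('r \<Rightarrow> nat) \<Rightarrow> 'r set \<Rightarrow> ('a, 'r) struct \<Rightarrow> ('a, 'r) struct \<Rightarrow>
   (('b \<Rightarrow> 'a) \<Rightarrow> bool) \<Rightarrow> ('b, 'r) struct \<Rightarrow> ('a \<Rightarrow> 'a) \<Rightarrow> bool" where
  "exp_determined L ar Ls K Ks P A g \<longleftrightarrow>
     (\<forall>f1\<in>Emb L ar A K. \<forall>f2\<in>Emb L ar A K.
        exp_dot Ls ar Ks A (emb_comp A g f1) = exp_dot Ls ar Ks A (emb_comp A g f2) \<longrightarrow>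
        P (emb_comp A g f1) = P (emb_comp A g f2))"

lemma exp_determined_emb_comp:
  assumes det: "exp_determined L ar Ls K Ks P A g" and g': "g' \<in> Emb L ar K K"
  shows "exp_determined L ar Ls K Ks P A (emb_comp K g g')"
  unfolding exp_determined_def
proof (intro ballI impI)
  fix f1 f2 assume f: "f1 \<in> Emb L ar A K" "f2 \<in> Emb L ar A K"
  then have assoc: "emb_comp A (emb_comp K g g') f1 = emb_comp A g (emb_comp A g' f1)"
    "emb_comp A (emb_comp K g g') f2 = emb_comp A g (emb_comp A g' f2)"
    by (simp_all add: emb_comp_assoc Emb_image_subset)
  have "emb_comp A g' f1 \<in> Emb L ar A K" "emb_comp A g' f2 \<in> Emb L ar A K"
    using f g' by (simp_all add: emb_comp_in_Emb)
  moreover assume "exp_dot Ls ar Ks A (emb_comp A (emb_comp K g g') f1) =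
    exp_dot Ls ar Ks A (emb_comp A (emb_comp K g g') f2)"
  ultimately show "P (emb_comp A (emb_comp K g g') f1) = P (emb_comp A (emb_comp K g g') f2)"
    using det unfolding exp_determined_def assoc by blast
qed

lemma exists_exp_determined_copy:
  assumes LLs: "L \<subseteq> Ls" and fin: "finite_BRDs L ar K"
    and brs: "big_ramsey_structure L ar Ls K Ks"
    and A: "A \<in> age L ar K" and g0: "g0 \<in> Emb L ar K K"
  obtains g where "g \<in> Emb L ar K K" "exp_determined L ar Ls K Ks P A (emb_comp K g0 g)"
proof -
  define t where "t = BRD L ar A K"
  have bound: "brd_bound L ar A K t"
    unfolding t_def using brd_bound_BRD fin A .
  have exp: "is_expansion L ar Ls Ks K" and card_exps: "card (exps L ar Ls Ks A) = t"
    and all_types: "\<And>g. g \<in> Emb L ar K K \<Longrightarrow>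
      card ((\<lambda>f. exp_dot Ls ar Ks A f) ` emb_comp A g ` Emb L ar A K) = t"
    using brs A by (auto simp: big_ramsey_structure_def t_def)
  have wfA: "wf_struct L ar A" and "Emb L ar A K \<noteq> {}"
    using A by (auto simp: age_def)
  then have "finite (exps L ar Ls Ks A)"
    using card_exps brd_bound_pos[OF bound] card.infinite by fastforce
  define \<kappa> where "\<kappa> f = exp_dot Ls ar Ks A (emb_comp A g0 f)" for f
  define \<pi> where "\<pi> f = P (emb_comp A g0 f)" for f
  have "\<kappa> f \<in> exps L ar Ls Ks A" if "f \<in> Emb L ar A K" for f
    unfolding \<kappa>_def by (rule exp_dot_in_exps[OF LLs exp wfA emb_comp_in_Emb[OF that g0]])
  then have "(\<lambda>f. (\<kappa> f, \<pi> f)) ` Emb L ar A K \<subseteq> exps L ar Ls Ks A \<times> UNIV"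
    by auto
  moreover have "finite (exps L ar Ls Ks A \<times> (UNIV :: bool set))"
    using \<open>finite (exps L ar Ls Ks A)\<close> by simp
  ultimately have fin_pairs: "finite ((\<lambda>f. (\<kappa> f, \<pi> f)) ` Emb L ar A K)"
    by (rule finite_subset)
  obtain g where g: "g \<in> Emb L ar K K"
    and few: "card ((\<lambda>f. (\<kappa> f, \<pi> f)) ` emb_comp A g ` Emb L ar A K) \<le> t"
    using brd_bound_finite_colouring[OF bound fin_pairs] by blast
  define C where "C = emb_comp A g ` Emb L ar A K"
  have C_sub: "C \<subseteq> Emb L ar A K"
    using emb_comp_in_Emb[OF _ g] unfolding C_def by blast
  have "\<kappa> ` C = (\<lambda>f. exp_dot Ls ar Ks A f) ` emb_comp A (emb_comp K g0 g) ` Emb L ar A K"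
    unfolding C_def \<kappa>_def image_image by (simp add: emb_comp_assoc Emb_image_subset)
  then have "card (\<kappa> ` C) = t"
    using all_types emb_comp_in_Emb[OF g g0] by simp
  then have le: "card ((\<lambda>f. (\<kappa> f, \<pi> f)) ` C) \<le> card (\<kappa> ` C)"
    using few by (simp add: C_def)
  have fin_C: "finite ((\<lambda>f. (\<kappa> f, \<pi> f)) ` C)"
    using fin_pairs C_sub by (meson finite_subset image_mono)
  have det: "\<pi> c1 = \<pi> c2" if "c1 \<in> C" "c2 \<in> C" "\<kappa> c1 = \<kappa> c2" for c1 c2
    using determined_if_card_image_pair_le[of \<kappa> \<pi> C] fin_C le that by blast
  have "exp_determined L ar Ls K Ks P A (emb_comp K g0 g)"
    unfolding exp_determined_def
  proof (intro ballI impI)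
    fix f1 f2 assume f: "f1 \<in> Emb L ar A K" "f2 \<in> Emb L ar A K"
    then have assoc: "emb_comp A (emb_comp K g0 g) f1 = emb_comp A g0 (emb_comp A g f1)"
      "emb_comp A (emb_comp K g0 g) f2 = emb_comp A g0 (emb_comp A g f2)"
      by (simp_all add: emb_comp_assoc Emb_image_subset)
    assume "exp_dot Ls ar Ks A (emb_comp A (emb_comp K g0 g) f1) =
      exp_dot Ls ar Ks A (emb_comp A (emb_comp K g0 g) f2)"
    then show "P (emb_comp A (emb_comp K g0 g) f1) = P (emb_comp A (emb_comp K g0 g) f2)"
      using det[of "emb_comp A g f1" "emb_comp A g f2"] f
      unfolding assoc by (simp add: C_def \<kappa>_def \<pi>_def)
  qed
  then show ?thesis
    using that g by blast
qed

lemma exists_exp_determined_copy_finite: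
  assumes LLs: "L \<subseteq> Ls" and fin: "finite_BRDs L ar K"
    and brs: "big_ramsey_structure L ar Ls K Ks"
    and "finite S" "S \<subseteq> age L ar K"
  obtains g where "g \<in> Emb L ar K K" "\<forall>A\<in>S. exp_determined L ar Ls K Ks P A g"
  using assms(4,5)
proof (induction S arbitrary: thesis rule: finite_induct)
  case empty
  then show ?case
    using restrict_id_in_Emb by blast
next
  case (insert A S)
  then obtain g where g: "g \<in> Emb L ar K K" "\<forall>B\<in>S. exp_determined L ar Ls K Ks P B g"
    by auto
  obtain g' where g': "g' \<in> Emb L ar K K" "exp_determined L ar Ls K Ks P A (emb_comp K g g')"
    using exists_exp_determined_copy[OF LLs fin brs _ g(1)] insert.prems(2) by blast
  have "\<forall>B\<in>insert A S. exp_determined L ar Ls K Ks P B (emb_comp K g g')"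
    using g g' exp_determined_emb_comp by blast
  then show ?case
    using insert.prems(1) emb_comp_in_Emb[OF g'(1) g(1)] by blast
qed

lemma recurrent_obtains_self_embedding:
  assumes LLs: "L \<subseteq> Ls" and exp: "is_expansion L ar Ls Ks K" and wf: "wf_struct L ar K"
    and "recurrent L ar Ls K Ks" and g: "g \<in> Emb L ar K K"
  obtains e where "e \<in> Emb L ar K K" "emb_comp K g e \<in> Emb Ls ar Ks Ks"
proof -
  have uK: "univ Ks = univ K"
    using exp by (simp add: is_expansion_def)
  obtain e where e: "e \<in> Emb Ls ar Ks (exp_dot Ls ar Ks K g)"
    using assms(4) g unfolding recurrent_def by blast
  have "e \<in> Emb L ar K K"
    by (rule Emb_reduct[OF LLs exp exp_dot_is_expansion[OF LLs exp wf g] e])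
  moreover have "emb_comp K g e \<in> Emb Ls ar Ks Ks"
  proof -
    have "emb_comp Ks g e \<in> Emb Ls ar Ks Ks"
      by (rule emb_comp_in_Emb_of_exp_dot[OF e]) (use g uK in \<open>simp_all add: Emb_def\<close>)
    then show ?thesis
      by (simp add: emb_comp_def uK)
  qed
  ultimately show ?thesis
    using that by blast
qed

lemma exp_determined_two_point_type:
  assumes LLs: "L \<subseteq> Ls" and exp: "is_expansion L ar Ls Ks K" and "x0 \<noteq> y0"
    and h: "h \<in> Emb Ls ar Ks Ks"
    and det: "\<And>A. A \<in> age L ar K \<Longrightarrow> univ A = {x0, y0} \<Longrightarrow>
      exp_determined L ar Ls K Ks (\<lambda>f. Q (f x0) (f y0)) A h"
    and in_K: "a \<in> univ K" "b \<in> univ K" "c \<in> univ K" "d \<in> univ K"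
    and "a \<noteq> b" "c \<noteq> d"
    and same_type: "\<forall>r\<in>Ls. \<forall>xs. set xs \<subseteq> {a, b} \<longrightarrow>
      (rel Ks r xs \<longleftrightarrow> rel Ks r (map (\<lambda>x. if x = a then c else d) xs))"
  shows "Q (h a) (h b) \<longleftrightarrow> Q (h c) (h d)"
proof -
  define X where "X = {x0, y0}"
  define \<alpha> where "\<alpha> = restrict (\<lambda>z. if z = x0 then a else b) X"
  define \<beta> where "\<beta> = restrict (\<lambda>z. if z = x0 then c else d) X"
  have uK: "univ Ks = univ K"
    using exp by (simp add: is_expansion_def)
  have maps: "\<alpha> ` X \<subseteq> univ K" "\<beta> ` X \<subseteq> univ K"
    using in_K by (auto simp: \<alpha>_def \<beta>_def X_def)
  have inj: "inj_on \<alpha> X" "inj_on \<beta> X"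
    using \<open>x0 \<noteq> y0\<close> \<open>a \<noteq> b\<close> \<open>c \<noteq> d\<close> by (auto simp: inj_on_def \<alpha>_def \<beta>_def X_def)
  have same_Ks: "rel Ks r (map \<alpha> xs) \<longleftrightarrow> rel Ks r (map \<beta> xs)"
    if "r \<in> Ls" "set xs \<subseteq> X" for r xs
  proof -
    have map_eq: "map \<beta> xs = map (\<lambda>x. if x = a then c else d) (map \<alpha> xs)"
      using that(2) \<open>x0 \<noteq> y0\<close> \<open>a \<noteq> b\<close> by (auto simp: \<alpha>_def \<beta>_def X_def)
    have "set (map \<alpha> xs) \<subseteq> {a, b}"
      using that(2) by (auto simp: \<alpha>_def X_def)
    then show ?thesis
      unfolding map_eq using same_type that(1) by blast
  qed
  then have same_exp: "pullback Ls ar Ks X \<alpha> = pullback Ls ar Ks X \<beta>"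
    by (auto simp: pullback_def fun_eq_iff)
  have "rel K r (map \<alpha> xs) \<longleftrightarrow> rel K r (map \<beta> xs)"
    if "r \<in> L" "set xs \<subseteq> X" for r xs
    using same_Ks[of r xs] that LLs exp by (auto simp: is_expansion_def)
  then have same_reduct: "pullback L ar K X \<alpha> = pullback L ar K X \<beta>"
    by (auto simp: pullback_def fun_eq_iff)
  have ext: "\<alpha> \<in> extensional X" "\<beta> \<in> extensional X"
    by (simp_all add: \<alpha>_def \<beta>_def)
  define A where "A = pullback L ar K X \<alpha>"
  have \<alpha>_Emb: "\<alpha> \<in> Emb L ar A K"
    unfolding A_def by (rule pullback_Emb[OF ext(1) inj(1) maps(1)])
  have \<beta>_Emb: "\<beta> \<in> Emb L ar A K"
    unfolding A_def same_reduct by (rule pullback_Emb[OF ext(2) inj(2) maps(2)])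
  have "A \<in> age L ar K"
    using \<alpha>_Emb unfolding age_def by (auto simp: A_def X_def wf_struct_pullback)
  moreover have "univ A = {x0, y0}"
    by (simp add: A_def X_def)
  ultimately have det_A: "exp_determined L ar Ls K Ks (\<lambda>f. Q (f x0) (f y0)) A h"
    by (rule det)
  have into_Ks: "\<alpha> ` univ A \<subseteq> univ Ks" "\<beta> ` univ A \<subseteq> univ Ks"
    using maps uK by (simp_all add: A_def)
  have "exp_dot Ls ar Ks A (emb_comp A h \<alpha>) = exp_dot Ls ar Ks A \<alpha>"
    by (rule exp_dot_emb_comp_self_embedding[OF h into_Ks(1)])
  also have "\<dots> = exp_dot Ls ar Ks A \<beta>"
    using same_exp by (simp add: exp_dot_eq_pullback A_def)
  also have "\<dots> = exp_dot Ls ar Ks A (emb_comp A h \<beta>)"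
    by (rule exp_dot_emb_comp_self_embedding[OF h into_Ks(2), symmetric])
  finally have "Q (emb_comp A h \<alpha> x0) (emb_comp A h \<alpha> y0) \<longleftrightarrow>
      Q (emb_comp A h \<beta> x0) (emb_comp A h \<beta> y0)"
    using det_A \<alpha>_Emb \<beta>_Emb unfolding exp_determined_def by blast
  then show ?thesis
    using \<open>x0 \<noteq> y0\<close> by (simp add: emb_comp_def A_def X_def \<alpha>_def \<beta>_def)
qed

lemma interprets_omega_order_if_exp_determined:
  fixes \<nu> :: "'a \<Rightarrow> nat" and K Ks :: "('a, 'r) struct"
  assumes LLs: "L \<subseteq> Ls" and exp: "is_expansion L ar Ls Ks K"
    and inf: "infinite (univ K)" and inj: "inj_on \<nu> (univ K)" and "x0 \<noteq> y0"
    and h: "h \<in> Emb Ls ar Ks Ks"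
    and det: "\<And>A. A \<in> age L ar K \<Longrightarrow> univ A = {x0, y0} \<Longrightarrow>
      exp_determined L ar Ls K Ks (\<lambda>f. \<nu> (f x0) < \<nu> (f y0)) A h"
  shows "interprets_omega_order Ls Ks"
proof -
  define less where "less a b \<longleftrightarrow> \<nu> (h a) < \<nu> (h b)" for a b
  have uK: "univ Ks = univ K"
    using exp by (simp add: is_expansion_def)
  have "inj_on h (univ K)" "h ` univ K \<subseteq> univ K"
    using h uK by (simp_all add: Emb_def)
  then have "inj_on (\<lambda>a. \<nu> (h a)) (univ K)"
    using inj comp_inj_on[of h "univ K" \<nu>] inj_on_subset[OF inj] by (simp add: comp_def)
  then obtain e :: "nat \<Rightarrow> 'a" where e: "bij_betw e UNIV (univ K)"
    and e_mono: "\<And>i j. i < j \<longleftrightarrow> \<nu> (h (e i)) < \<nu> (h (e j))"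
    by (rule inj_on_nat_ordered_enumeration[OF inf]) iprover
  have less_type: "less a b \<longleftrightarrow> less c d"
    if "a \<in> univ K" "b \<in> univ K" "c \<in> univ K" "d \<in> univ K" "a = b \<longleftrightarrow> c = d"
      "\<forall>r\<in>Ls. \<forall>xs. set xs \<subseteq> {a, b} \<longrightarrow>
         (rel Ks r xs \<longleftrightarrow> rel Ks r (map (\<lambda>x. if x = a then c else d) xs))"
    for a b c d
  proof (cases "a = b")
    case True
    then show ?thesis
      using that(5) by (simp add: less_def)
  next
    case False
    then have "c \<noteq> d"
      using that(5) by blast
    with False show ?thesis
      using exp_determined_two_point_type[where Q = "\<lambda>x y. \<nu> x < \<nu> y",
          OF LLs exp \<open>x0 \<noteq> y0\<close> h det that(1-4) _ _ that(6)]
      unfolding less_def by simp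
  qed
  show ?thesis
    unfolding interprets_omega_order_def uK
  proof (intro exI[of _ less] conjI)
    show "\<exists>e :: nat \<Rightarrow> 'a. bij_betw e UNIV (univ K) \<and> (\<forall>i j. i < j \<longleftrightarrow> less (e i) (e j))"
      unfolding less_def using e e_mono by blast
    show "\<forall>a\<in>univ K. \<forall>b\<in>univ K. \<forall>c\<in>univ K. \<forall>d\<in>univ K.
      (a = b \<longleftrightarrow> c = d) \<and>
      (\<forall>r\<in>Ls. \<forall>xs. set xs \<subseteq> {a, b} \<longrightarrow>
         (rel Ks r xs \<longleftrightarrow> rel Ks r (map (\<lambda>x. if x = a then c else d) xs))) \<longrightarrow>
      (less a b \<longleftrightarrow> less c d)"
      by (intro ballI impI; elim conjE; rule less_type; assumption)
  qed
qed

theorem corollary2p5: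
  fixes L Ls :: "'r set" and ar :: "'r \<Rightarrow> nat"
    and K Ks :: "('a, 'r) struct"
  assumes "finite L"
    and "L \<subseteq> Ls"
    and "fraisse_limit L ar K"
    and "finite_BRDs L ar K"
    and "big_ramsey_structure L ar Ls K Ks"
    and "recurrent L ar Ls K Ks"
  shows "interprets_omega_order Ls Ks"
proof -
  have exp: "is_expansion L ar Ls Ks K"
    using assms(5) by (simp add: big_ramsey_structure_def)
  have wf: "wf_struct L ar K" and inf: "infinite (univ K)" and "countable (univ K)"
    using assms(3) by (simp_all add: fraisse_limit_def)
  obtain x0 y0 :: 'a where "x0 \<noteq> y0"
    using inf by (metis finite.emptyI finite_insert finite_subset insertCI subsetI)
  define S where "S = {A \<in> age L ar K. univ A = {x0, y0}}"
  define P where "P f \<longleftrightarrow> to_nat_on (univ K) (f x0) < to_nat_on (univ K) (f y0)"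
    for f :: "'a \<Rightarrow> 'a"
  have "finite S"
    unfolding S_def by (rule finite_age_univ_eq[OF assms(1)]) simp
  moreover have "S \<subseteq> age L ar K"
    unfolding S_def by blast
  ultimately obtain g where g: "g \<in> Emb L ar K K"
    and det_g: "\<forall>A\<in>S. exp_determined L ar Ls K Ks P A g"
    by (rule exists_exp_determined_copy_finite[OF assms(2,4,5)])
  obtain e where "e \<in> Emb L ar K K" and h: "emb_comp K g e \<in> Emb Ls ar Ks Ks"
    by (rule recurrent_obtains_self_embedding[OF assms(2) exp wf assms(6) g])
  then have "exp_determined L ar Ls K Ks P A (emb_comp K g e)"
    if "A \<in> age L ar K" "univ A = {x0, y0}" for A
    using det_g that exp_determined_emb_comp unfolding S_def by blast
  then show ?thesis
    using interprets_omega_order_if_exp_determined[OF assms(2) exp inf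
        inj_on_to_nat_on[OF \<open>countable (univ K)\<close>] \<open>x0 \<noteq> y0\<close> h]
    unfolding P_def by blast
qed

end
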